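(* Let $(\mathbb S,+,\cdot)$ be an S-Field with Base Unit $A$, let $s\in\mathbb S$ and let $m\in\mathbb S_0$ with $m\neq 0$. Then there exist $x,y\in\mathbb S_0$ with $s=x-1+y\cdot A$, and, for such $x,y$, Division By Scalars is given by the unique formula $$\frac{s}{m}=m^{-1}\cdot[x+y-(m^{-1}\cdot y)]-1+(m^{-1}\cdot y)\cdot A.$$
   Context: An S-Structure is a triple $(\mathbb S,+,\cdot)$ where $\mathbb S$ is a set and $+,\cdot$ are binary operations on $\mathbb S$ such that: $(\mathbb S,+)$ is a commutative group with identity $0$ (the inverse of $s$ is written $-s$, and $s-t:=s+(-t)$); $\mathbb S$ is closed under $\cdot$; and there exists $s\in\mathbb S$ with $0\cdot s\neq 0$ or $s\cdot 0\neq 0$. Multiplication binds tighter than addition. The structures considered come with a distinguished element of $\mathbb S$ denoted $1$. It is Commutative if $s\cdot t=t\cdot s$ for all $s,t$. For a Commutative S-Structure and $\alpha\in\mathbb S$, put $\mathbb S_\alpha=\{s\in\mathbb S:0\cdot s=s\cdot 0=\alpha\}$ and $\Lambda=\{\alpha\in\mathbb S:\mathbb S_\alpha\neq\emptyset\}$. Wheel Distributive: $s\cdot(t+r)+(s\cdot 0)=(s\cdot t)+(s\cdot r)$ for all $s,t,r\in\mathbb S$. S-Associative: for all $m,n\in\mathbb S_0$ and $s\in\mathbb S$, $m\cdot(n\cdot s)=(m\cdot n)\cdot s-([(m-1)\cdot(n-1)]\cdot(0\cdot s))$. Base: if $\mathbb S_0\neq\emptyset$ and $\alpha\in\Lambda$,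 $q\in\mathbb S_\alpha$ is a Base for $\mathbb S_\alpha$ if $q+\beta\in\mathbb S_\alpha$ for all $\beta\in\mathbb S_0$ and every $s\in\mathbb S_\alpha$ equals $q+\beta$ for some $\beta\in\mathbb S_0$. Coordinated: $\mathbb S_0\neq\emptyset$ and every $\mathbb S_\alpha$ with $\alpha\in\Lambda$ has a Base. Standard Bases: a Coordinated Commutative S-Structure has Standard Bases if there is a specified element $q_0(1)\in\mathbb S_1$ which is a Base for $\mathbb S_1$, and for every $\alpha\in\Lambda$ the element $q_0(\alpha):=\alpha\cdot(q_0(1)+1)-1$ lies in $\mathbb S_\alpha$ and is a Base for $\mathbb S_\alpha$. The Base Unit is $A:=q_0(1)+1$. An Essential S-Structure is an S-Structure that is Commutative, Wheel Distributive, S-Associative, has Standard Bases (in particular is Coordinated), satisfies $0,1\in\mathbb S_0$, and satisfies $\mathbb S_0=\{1\cdot x:x\in\mathbb S_0\}$. A Unity is an element $e\in\Lambda$ with $e\cdot s=s\cdot e=s$ for all $s\in\mathbb S$. Scalar Inverses: the structure has a Unity $e$ and for every $x\in\mathbb S_0$ with $x\neq 0$ there is $x^{-1}\in\mathbb S_0$ with $x\cdot x^{-1}=x^{-1}\cdot x=e$. An S-Ring is an Essential S-Structure with a Unity; an S-Field is an S-Ring with Scalar Inverses. Division By Scalars: for $s\in\mathbb S$ and $m\in\mathbb S_0$, $\frac{s}{m}$ denotes an element $q\in\mathbb S$ such that $s=m\cdot q=q\cdot m$. *)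

theory Defs
  imports Main
begin

text \<open>An S-Structure is modelled on a type 'a whose addition forms a commutative
group (class ab_group_add; the set S is UNIV), with the multiplication a
parameter mul, the distinguished element 1 a parameter u, and the specified
Base q0(1) a parameter q1.\<close>

definition S_sub :: "('a::ab_group_add \<Rightarrow> 'a \<Rightarrow> 'a) \<Rightarrow> 'a \<Rightarrow> 'a set" where
  "S_sub mul \<alpha> = {s. mul 0 s = \<alpha> \<and> mul s 0 = \<alpha>}"

definition Lam :: "('a::ab_group_add \<Rightarrow> 'a \<Rightarrow> 'a) \<Rightarrow> 'a set" where
  "Lam mul = {\<alpha>. S_sub mul \<alpha> \<noteq> {}}"

definition s_structure :: "('a::ab_group_add \<Rightarrow> 'a \<Rightarrow> 'a) \<Rightarrow> bool" where
  "s_structure mul \<longleftrightarrow> (\<exists>s. mul 0 s \<noteq> 0 \<or> mul s 0 \<noteq> 0)"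

definition s_commutative :: "('a \<Rightarrow> 'a \<Rightarrow> 'a) \<Rightarrow> bool" where
  "s_commutative mul \<longleftrightarrow> (\<forall>s t. mul s t = mul t s)"

definition wheel_distributive :: "('a::ab_group_add \<Rightarrow> 'a \<Rightarrow> 'a) \<Rightarrow> bool" where
  "wheel_distributive mul \<longleftrightarrow>
     (\<forall>s t r. mul s (t + r) + mul s 0 = mul s t + mul s r)"

definition s_associative :: "('a::ab_group_add \<Rightarrow> 'a \<Rightarrow> 'a) \<Rightarrow> 'a \<Rightarrow> bool" where
  "s_associative mul u \<longleftrightarrow>
     (\<forall>m\<in>S_sub mul 0. \<forall>n\<in>S_sub mul 0. \<forall>s.
        mul m (mul n s) = mul (mul m n) s - mul (mul (m - u) (n - u)) (mul 0 s))"

definition is_base :: "('a::ab_group_add \<Rightarrow> 'a \<Rightarrow> 'a) \<Rightarrow> 'a \<Rightarrow> 'a \<Rightarrow> bool" where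
  "is_base mul \<alpha> q \<longleftrightarrow> S_sub mul 0 \<noteq> {} \<and> \<alpha> \<in> Lam mul \<and> q \<in> S_sub mul \<alpha> \<and>
     (\<forall>\<beta>\<in>S_sub mul 0. q + \<beta> \<in> S_sub mul \<alpha>) \<and>
     (\<forall>s\<in>S_sub mul \<alpha>. \<exists>\<beta>\<in>S_sub mul 0. s = q + \<beta>)"

definition coordinated :: "('a::ab_group_add \<Rightarrow> 'a \<Rightarrow> 'a) \<Rightarrow> bool" where
  "coordinated mul \<longleftrightarrow> S_sub mul 0 \<noteq> {} \<and> (\<forall>\<alpha>\<in>Lam mul. \<exists>q. is_base mul \<alpha> q)"

definition q0 :: "('a::ab_group_add \<Rightarrow> 'a \<Rightarrow> 'a) \<Rightarrow> 'a \<Rightarrow> 'a \<Rightarrow> 'a \<Rightarrow> 'a" where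
  "q0 mul u q1 \<alpha> = mul \<alpha> (q1 + u) - u"

definition base_unit :: "'a::ab_group_add \<Rightarrow> 'a \<Rightarrow> 'a" where
  "base_unit u q1 = q1 + u"

definition standard_bases :: "('a::ab_group_add \<Rightarrow> 'a \<Rightarrow> 'a) \<Rightarrow> 'a \<Rightarrow> 'a \<Rightarrow> bool" where
  "standard_bases mul u q1 \<longleftrightarrow> coordinated mul \<and> s_commutative mul \<and>
     q1 \<in> S_sub mul u \<and> is_base mul u q1 \<and>
     (\<forall>\<alpha>\<in>Lam mul. q0 mul u q1 \<alpha> \<in> S_sub mul \<alpha> \<and> is_base mul \<alpha> (q0 mul u q1 \<alpha>))"

definition essential :: "('a::ab_group_add \<Rightarrow> 'a \<Rightarrow> 'a) \<Rightarrow> 'a \<Rightarrow> 'a \<Rightarrow> bool" where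
  "essential mul u q1 \<longleftrightarrow> s_structure mul \<and> s_commutative mul \<and> wheel_distributive mul \<and>
     s_associative mul u \<and> standard_bases mul u q1 \<and>
     0 \<in> S_sub mul 0 \<and> u \<in> S_sub mul 0 \<and>
     S_sub mul 0 = {mul u x | x. x \<in> S_sub mul 0}"

definition is_unity :: "('a::ab_group_add \<Rightarrow> 'a \<Rightarrow> 'a) \<Rightarrow> 'a \<Rightarrow> bool" where
  "is_unity mul e \<longleftrightarrow> e \<in> Lam mul \<and> (\<forall>s. mul e s = s \<and> mul s e = s)"

definition scalar_inverses :: "('a::ab_group_add \<Rightarrow> 'a \<Rightarrow> 'a) \<Rightarrow> bool" where
  "scalar_inverses mul \<longleftrightarrow> (\<exists>e. is_unity mul e \<and>
     (\<forall>x\<in>S_sub mul 0. x \<noteq> 0 \<longrightarrow> (\<exists>y\<in>S_sub mul 0. mul x y = e \<and> mul y x = e)))"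

definition s_ring :: "('a::ab_group_add \<Rightarrow> 'a \<Rightarrow> 'a) \<Rightarrow> 'a \<Rightarrow> 'a \<Rightarrow> bool" where
  "s_ring mul u q1 \<longleftrightarrow> essential mul u q1 \<and> (\<exists>e. is_unity mul e)"

definition s_field :: "('a::ab_group_add \<Rightarrow> 'a \<Rightarrow> 'a) \<Rightarrow> 'a \<Rightarrow> 'a \<Rightarrow> bool" where
  "s_field mul u q1 \<longleftrightarrow> s_ring mul u q1 \<and> scalar_inverses mul"

definition is_div_by_scalar :: "('a \<Rightarrow> 'a \<Rightarrow> 'a) \<Rightarrow> 'a \<Rightarrow> 'a \<Rightarrow> 'a \<Rightarrow> bool" where
  "is_div_by_scalar mul s m q \<longleftrightarrow> s = mul m q \<and> s = mul q m"

end

theory Submission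
  imports Defs
begin

text \<open>In an S-Field the distinguished element 1 is itself the unity: otherwise
inverting the scalar e - 1 and feeding it into S-associativity would force
0 \<cdot> t = 0 for every t. Hence S-associativity degenerates to ordinary
associativity whenever 0 \<cdot> s = 0, and the scalars S_0 act linearly.
Writing s = x - 1 + y \<cdot> A (the Standard Base of S_{0 \<cdot> s}, with y = 0 \<cdot> s),
the proposed quotient is checked by expanding m \<cdot> ((m\<inverse> y) \<cdot> A) with
S-associativity and 0 \<cdot> A = 1; uniqueness follows because m \<cdot> t = 0 first
forces t into S_0 and then t = m\<inverse> \<cdot> (m \<cdot> t) = 0.\<close>

lemma unity_unique: "is_unity mul e \<Longrightarrow> is_unity mul e' \<Longrightarrow> e = e'"
  unfolding is_unity_def by metis

locale essential_s_structure =
  fixes mul :: "'a::ab_group_add \<Rightarrow> 'a \<Rightarrow> 'a" (infixl "\<odot>" 70) and u q1 :: 'a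
  assumes essential: "essential mul u q1"
begin

abbreviation scalars :: "'a set" where
  "scalars \<equiv> S_sub mul 0"

abbreviation A :: 'a where
  "A \<equiv> base_unit u q1"

lemma mult_commute: "a \<odot> b = b \<odot> a"
  using essential by (simp add: essential_def s_commutative_def)

lemma wheel_distrib: "a \<odot> (b + c) + a \<odot> 0 = a \<odot> b + a \<odot> c"
  using essential by (simp add: essential_def wheel_distributive_def)

lemma s_assoc:
  "m \<in> scalars \<Longrightarrow> n \<in> scalars \<Longrightarrow> m \<odot> (n \<odot> s) = (m \<odot> n) \<odot> s - ((m - u) \<odot> (n - u)) \<odot> (0 \<odot> s)"
  using essential by (simp add: essential_def s_associative_def)

lemma scalars_iff: "k \<in> scalars \<longleftrightarrow> 0 \<odot> k = 0"
  by (simp add: S_sub_def mult_commute[of k 0])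

lemma scalar_mult_zero: "k \<in> scalars \<Longrightarrow> k \<odot> 0 = 0"
  by (simp add: scalars_iff mult_commute[of k 0])

lemma zero_scalar: "0 \<in> scalars" and one_scalar: "u \<in> scalars"
  using essential by (auto simp: essential_def)

lemma scalar_mult_add: "k \<in> scalars \<Longrightarrow> k \<odot> (a + b) = k \<odot> a + k \<odot> b"
  using wheel_distrib[of k a b] by (simp add: scalar_mult_zero)

lemma scalar_mult_minus: "k \<in> scalars \<Longrightarrow> k \<odot> (- a) = - (k \<odot> a)"
  using scalar_mult_add[of k a "- a"] by (simp add: scalar_mult_zero eq_neg_iff_add_eq_0 add.commute)

lemma scalar_mult_diff: "k \<in> scalars \<Longrightarrow> k \<odot> (a - b) = k \<odot> a - k \<odot> b"
  using scalar_mult_add[of k a "- b"] scalar_mult_minus[of k b] by simp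

lemma scalars_add: "a \<in> scalars \<Longrightarrow> b \<in> scalars \<Longrightarrow> a + b \<in> scalars"
  using scalar_mult_add[OF zero_scalar, of a b] by (simp add: scalars_iff)

lemma scalars_minus: "a \<in> scalars \<Longrightarrow> - a \<in> scalars"
  using scalar_mult_minus[OF zero_scalar, of a] by (simp add: scalars_iff)

lemma scalars_diff: "a \<in> scalars \<Longrightarrow> b \<in> scalars \<Longrightarrow> a - b \<in> scalars"
  using scalars_add[of a "- b"] scalars_minus[of b] by simp

lemma minus_mult_scalar: "k \<in> scalars \<Longrightarrow> (- a) \<odot> k = - (a \<odot> k)"
  using scalar_mult_minus[of k a] by (simp add: mult_commute)

lemma one_mult_scalar: "k \<in> scalars \<Longrightarrow> u \<odot> k \<in> scalars"
  using essential by (auto simp: essential_def)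

lemma scalars_mult:
  assumes a: "a \<in> scalars" and b: "b \<in> scalars"
  shows "a \<odot> b \<in> scalars"
proof -
  have "(0 - u) \<odot> (a - u) \<in> scalars"
    using minus_mult_scalar[of "a - u" u] one_mult_scalar[of "a - u"] scalars_diff[OF a one_scalar]
      scalars_minus by (simp add: mult_commute[of u])
  then have "0 \<odot> (a \<odot> b) = (0 \<odot> a) \<odot> b"
    using s_assoc[OF zero_scalar a, of b] b by (simp add: scalars_iff scalar_mult_zero)
  then show ?thesis
    using a b by (simp add: scalars_iff)
qed

lemma zero_mult_base_unit: "0 \<odot> A = u"
proof -
  have "q1 \<in> S_sub mul u"
    using essential by (simp add: essential_def standard_bases_def)
  then show ?thesis
    using scalar_mult_add[OF zero_scalar, of q1 u] one_scalar
    by (simp add: base_unit_def S_sub_def scalars_iff)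
qed

end

locale s_field_structure = essential_s_structure +
  assumes s_field: "s_field mul u q1"
begin

lemma one_is_unity: "is_unity mul u"
proof -
  obtain e where e: "is_unity mul e"
    and inv: "\<And>x. x \<in> scalars \<Longrightarrow> x \<noteq> 0 \<Longrightarrow> \<exists>y\<in>scalars. x \<odot> y = e"
    using s_field by (auto simp: s_field_def scalar_inverses_def)
  have unit: "e \<odot> t = t" for t
    using e by (simp add: is_unity_def)
  have e_scalar: "e \<in> scalars"
    using unit by (simp add: scalars_iff mult_commute)
  have "u = e"
  proof (rule ccontr)
    assume "u \<noteq> e"
    then obtain c where c: "c \<in> scalars" "(e - u) \<odot> c = e"
      using inv[of "e - u"] scalars_diff[OF e_scalar one_scalar] by auto
    have "0 \<odot> t = 0" for t
    proof -
      have "e \<odot> ((c + u) \<odot> t) = (e \<odot> (c + u)) \<odot> t - ((e - u) \<odot> (c + u - u)) \<odot> (0 \<odot> t)"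
        using s_assoc[OF e_scalar scalars_add[OF c(1) one_scalar]] .
      then show ?thesis
        using c(2) unit by simp
    qed
    moreover have "s_structure mul"
      using essential by (simp add: essential_def)
    ultimately show False
      by (simp add: s_structure_def mult_commute)
  qed
  then show ?thesis
    using e by simp
qed

lemma one_mult [simp]: "u \<odot> s = s" and mult_one [simp]: "s \<odot> u = s"
  using one_is_unity by (simp_all add: is_unity_def)

lemma scalar_inverse_exists:
  assumes "m \<in> scalars" "m \<noteq> 0"
  obtains m' where "m' \<in> scalars" "m' \<odot> m = u"
proof -
  obtain e where "is_unity mul e" and "\<exists>y\<in>scalars. y \<odot> m = e"
    using s_field assms by (fastforce simp: s_field_def scalar_inverses_def)
  then show ?thesis
    using that unity_unique[OF one_is_unity] by blast
qed

lemma zero_mult_scalar: "0 \<odot> t \<in> scalars"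
proof -
  have "(0 - u) \<odot> (0 - u) = u"
    using scalar_mult_minus[OF scalars_minus[OF one_scalar], of u] minus_mult_scalar[OF one_scalar, of u]
    by simp
  then have "0 \<odot> (0 \<odot> t) = 0"
    using s_assoc[OF zero_scalar zero_scalar, of t] by (simp add: scalar_mult_zero zero_scalar)
  then show ?thesis
    by (simp add: scalars_iff)
qed

lemma standard_decomposition: "\<exists>x\<in>scalars. \<exists>y\<in>scalars. s = x - u + y \<odot> A"
proof -
  define \<alpha> where "\<alpha> = 0 \<odot> s"
  have s: "s \<in> S_sub mul \<alpha>"
    by (simp add: S_sub_def \<alpha>_def mult_commute)
  then have "is_base mul \<alpha> (q0 mul u q1 \<alpha>)"
    using essential by (auto simp: essential_def standard_bases_def Lam_def)
  then obtain \<beta> where "\<beta> \<in> scalars" "s = q0 mul u q1 \<alpha> + \<beta>"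
    using s by (auto simp: is_base_def)
  then have "s = \<beta> - u + \<alpha> \<odot> A"
    by (simp add: q0_def base_unit_def)
  then show ?thesis
    using \<open>\<beta> \<in> scalars\<close> zero_mult_scalar[of s] unfolding \<alpha>_def by blast
qed

lemma scalar_mult_assoc: "a \<in> scalars \<Longrightarrow> b \<in> scalars \<Longrightarrow> t \<in> scalars \<Longrightarrow> a \<odot> (b \<odot> t) = (a \<odot> b) \<odot> t"
  using s_assoc[of a b t] scalars_mult[OF scalars_diff scalars_diff, of a u b u]
  by (simp add: one_scalar scalars_iff scalar_mult_zero)

lemma shifted_mult:
  assumes a: "a \<in> scalars" and b: "b \<in> scalars"
  shows "(a - u) \<odot> (b - u) = a \<odot> b - a - b + u"
proof -
  have "(a - u) \<odot> (b - u) = b \<odot> (a - u) - (a - u)"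
    using scalar_mult_diff[OF scalars_diff[OF a one_scalar], of b u] by (simp add: mult_commute)
  also have "b \<odot> (a - u) = a \<odot> b - b"
    using scalar_mult_diff[OF b, of a u] by (simp add: mult_commute)
  finally show ?thesis
    by simp
qed

lemma scalar_mult_eq_zero:
  assumes m: "m \<in> scalars" "m \<noteq> 0" and t: "m \<odot> t = 0"
  shows "t = 0"
proof -
  obtain m' where m': "m' \<in> scalars" "m' \<odot> m = u"
    using scalar_inverse_exists[OF m] .
  have c: "(m' - u) \<odot> (m - u) \<in> scalars"
    using m' m by (intro scalars_mult scalars_diff one_scalar)
  have "0 = t - ((m' - u) \<odot> (m - u)) \<odot> (0 \<odot> t)"
    using s_assoc[OF m'(1) m(1), of t] t m' by (simp add: scalar_mult_zero)
  \<comment> \<open>so t is a product of scalars, and on scalars S-associativity is plain associativity\<close>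
  then have "t \<in> scalars"
    using scalars_mult[OF c zero_mult_scalar, of t] by simp
  then show ?thesis
    using scalar_mult_assoc[OF m'(1) m(1), of t] t m' by (simp add: scalar_mult_zero)
qed

lemma scalar_mult_cancel:
  "m \<in> scalars \<Longrightarrow> m \<noteq> 0 \<Longrightarrow> m \<odot> t = m \<odot> t' \<Longrightarrow> t = t'"
  using scalar_mult_eq_zero[of m "t - t'"] by (simp add: scalar_mult_diff)

lemma mult_quotient:
  assumes m: "m \<in> scalars" "m' \<in> scalars" "m \<odot> m' = u"
    and xy: "x \<in> scalars" "y \<in> scalars"
  shows "m \<odot> (m' \<odot> (x + y - m' \<odot> y) - u + (m' \<odot> y) \<odot> A) = x - u + y \<odot> A"
proof -
  define n where "n = m' \<odot> y"
  have n: "n \<in> scalars"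
    unfolding n_def using m(2) xy(2) by (rule scalars_mult)
  have mn: "m \<odot> n = y"
    unfolding n_def using scalar_mult_assoc[OF m(1,2) xy(2)] m(3) by simp
  have w: "m \<odot> (m' \<odot> (x + y - n)) = x + y - n"
    using scalar_mult_assoc[OF m(1,2)] m(3) n xy by (simp add: scalars_add scalars_diff)
  have nA: "m \<odot> (n \<odot> A) = y \<odot> A - (y - m - n + u)"
    using s_assoc[OF m(1) n, of A] shifted_mult[OF m(1) n] mn by (simp add: zero_mult_base_unit)
  have "m \<odot> (m' \<odot> (x + y - n) - u + n \<odot> A) = m \<odot> (m' \<odot> (x + y - n)) - m \<odot> u + m \<odot> (n \<odot> A)"
    by (simp only: scalar_mult_add[OF m(1)] scalar_mult_diff[OF m(1)])
  also have "\<dots> = x - u + y \<odot> A"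
    by (simp add: w nA)
  finally show ?thesis
    unfolding n_def .
qed

end

theorem proposition4p1p1:
  fixes mul :: "'a::ab_group_add \<Rightarrow> 'a \<Rightarrow> 'a" and u q1 e minv s m :: 'a
  assumes "s_field mul u q1"
    and "is_unity mul e"
    and "m \<in> S_sub mul 0" and "m \<noteq> 0"
    and "minv \<in> S_sub mul 0" and "mul m minv = e" and "mul minv m = e"
  shows "(\<exists>x\<in>S_sub mul 0. \<exists>y\<in>S_sub mul 0. s = x - u + mul y (base_unit u q1)) \<and>
    (\<forall>x\<in>S_sub mul 0. \<forall>y\<in>S_sub mul 0. s = x - u + mul y (base_unit u q1) \<longrightarrow>
       (let q = mul minv (x + y - mul minv y) - u + mul (mul minv y) (base_unit u q1)
        in is_div_by_scalar mul s m q \<and> (\<forall>q'. is_div_by_scalar mul s m q' \<longrightarrow> q' = q)))"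
proof -
  interpret s_field_structure mul u q1
    using assms(1) by unfold_locales (simp_all add: s_field_def s_ring_def)
  have "e = u"
    using unity_unique[OF assms(2) one_is_unity] .
  have "is_div_by_scalar mul s m q \<and> (\<forall>q'. is_div_by_scalar mul s m q' \<longrightarrow> q' = q)"
    if "x \<in> S_sub mul 0" "y \<in> S_sub mul 0" "s = x - u + mul y (base_unit u q1)"
      and "q = mul minv (x + y - mul minv y) - u + mul (mul minv y) (base_unit u q1)" for x y q
  proof -
    have "mul m q = s"
      using mult_quotient[OF assms(3,5)] assms(6) that \<open>e = u\<close> by simp
    then show ?thesis
      using scalar_mult_cancel[OF assms(3,4)]
      by (auto simp: is_div_by_scalar_def mult_commute[of q])
  qed
  then show ?thesis
    using standard_decomposition by (simp add: Let_def)
qed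

end
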